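(* Let $N(I,O,r)$ be a negator and $T(B,C)$ a proper $(2,3)$-pole. Form the $(2,3)$-pole $M=\operatorname{NT}(N,T)$ as follows: perform the junction of $O$ and $B$; choose one semiedge of $C$, whose dangling edge is $e$, subdivide $e$ with a new vertex $v$ (so that $v$ lies on $e$ and the free end of $e$ remains a semiedge, now of a dangling edge at $v$), and attach the residual semiedge $r$ of $N$ to $v$. The connectors of $M$ are $I=\{i_1,i_2\}$ and $C'=\{e_1,e_2,e_3\}$, where $e_1,e_2$ are the two other semiedges of $C$ and $e_3$ is the free end of the subdivided edge $e$. Then every colouring $\varphi$ of $M$ satisfies $\varphi(i_1)=\varphi(i_2)$ and $\varphi(e_1)+\varphi(e_2)+\varphi(e_3)=0$. Moreover, if $N$ is a perfect negator and $T$ is perfect, then for all $x,a,b,c\in\mathbb{K}$ with $a+b+c=0$ there is a colouring $\varphi$ of $M$ with $(\varphi(i_1),\varphi(i_2),\varphi(e_1),\varphi(e_2),\varphi(e_3))=(x,x,a,b,c)$.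
   Context: A multipole consists of vertices and edges; each edge has two ends, each either incident with a vertex or free; a free end is a semiedge. All multipoles are cubic (every vertex incident with exactly three edge ends; loops and parallel edges allowed). Semiedges are partitioned into connectors; a $(c_1,\dots,c_n)$-pole has connectors of sizes $c_1,\dots,c_n$. The junction of two semiedges identifies the two free ends into a single edge (attaching a semiedge to a vertex means making that vertex the end of it); the junction of two connectors performs junctions along an arbitrary bijection. Let $\mathbb{K}=\{(0,1),(1,0),(1,1)\}\subset\mathbb{Z}_2\times\mathbb{Z}_2$. A colouring of a multipole assigns elements of $\mathbb{K}$ to edges so that at every vertex the three incident edge ends get distinct colours. Flow through a connector $S$: $\varphi_*(S)=\sum_{e\in S}\varphi(e)$. A snark is a connected cubic graph with no colouring. Negator: for a snark $G$ and a path $uwv$ in $G$, $\operatorname{Neg}(G;u,v)$ is the $(2,2,1)$-pole $N(I,O,r)$ obtained by deleting $u,w,v$, with $I$ the two semiedges formerly at $u$, $O$ the two semiedges formerly at $v$, $r$ the semiedge formerly at $w$. A negator $N(\{i_1,i_2\},\{o_1,o_2\},r)$ is perfect if its set of tuples $(\varphi(i_1),\varphi(i_2),\varphi(o_1),\varphi(o_2),\varphi(r))$ over colourings equals $\{(x,x,a,b,a+b),(a,b,x,x,a+b): x,a,b\in\mathbb{K}, a\ne b\}$. A $(2,3)$-pole $T(B,C)$ is proper if $\varphi_*(B)\ne0$ and $\varphi_*(C)\ne0$ for every colouring; it is perfect (as a proper $(2,3)$-pole) if its colouring set on $(B,C)$ equals $\{(x_1,x_2,y_1,y_2,y_3)\in\mathbb{K}^5: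 x_1+x_2=y_1+y_2+y_3\ne0\}$. *)

theory Defs
  imports Main "HOL-Library.Z2" "HOL-Library.Product_Plus"
begin

type_synonym colour = "bit \<times> bit"

definition KK :: "colour set" where
  "KK = {(0,1), (1,0), (1,1)}"

text \<open>A multipole is given by its set of edge ends. Each end d has a partner end
  mate d (the other end of the same edge) and is either attached to a vertex
  (att d = Some v) or free (att d = None); a free end is a semiedge.
  The colour of an edge is the common colour of its two ends.\<close>

record ('d, 'v) mpole =
  verts :: "'v set"
  ends  :: "'d set"
  mate  :: "'d \<Rightarrow> 'd"
  att   :: "'d \<Rightarrow> 'v option"

definition ends_at :: "('d,'v) mpole \<Rightarrow> 'v \<Rightarrow> 'd set" where
  "ends_at M v = {d \<in> ends M. att M d = Some v}"

definition semiedges :: "('d,'v) mpole \<Rightarrow> 'd set" where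
  "semiedges M = {d \<in> ends M. att M d = None}"

definition mpole_wf :: "('d,'v) mpole \<Rightarrow> bool" where
  "mpole_wf M \<longleftrightarrow> finite (verts M) \<and> finite (ends M) \<and>
     (\<forall>d \<in> ends M. mate M d \<in> ends M \<and> mate M d \<noteq> d \<and> mate M (mate M d) = d) \<and>
     (\<forall>d \<in> ends M. \<forall>v. att M d = Some v \<longrightarrow> v \<in> verts M) \<and>
     (\<forall>v \<in> verts M. card (ends_at M v) = 3)"

definition colouring :: "('d,'v) mpole \<Rightarrow> ('d \<Rightarrow> colour) \<Rightarrow> bool" where
  "colouring M \<phi> \<longleftrightarrow>
     (\<forall>d \<in> ends M. \<phi> d \<in> KK \<and> \<phi> (mate M d) = \<phi> d) \<and>
     (\<forall>v \<in> verts M. inj_on \<phi> (ends_at M v))"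

definition adj :: "('d,'v) mpole \<Rightarrow> 'v \<Rightarrow> 'v \<Rightarrow> bool" where
  "adj G x y \<longleftrightarrow> (\<exists>d \<in> ends G. att G d = Some x \<and> att G (mate G d) = Some y)"

definition connected_mp :: "('d,'v) mpole \<Rightarrow> bool" where
  "connected_mp G \<longleftrightarrow> (\<forall>x \<in> verts G. \<forall>y \<in> verts G. (adj G)\<^sup>*\<^sup>* x y)"

definition snark :: "('d,'v) mpole \<Rightarrow> bool" where
  "snark G \<longleftrightarrow> mpole_wf G \<and> semiedges G = {} \<and> verts G \<noteq> {} \<and> connected_mp G \<and>
     \<not> (\<exists>\<phi>. colouring G \<phi>)"

definition Neg :: "('d,'v) mpole \<Rightarrow> 'v \<Rightarrow> 'v \<Rightarrow> 'v \<Rightarrow> ('d,'v) mpole" where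
  "Neg G u w v =
    \<lparr> verts = verts G - {u, w, v},
      ends = {d \<in> ends G. \<not> (att G d \<in> Some ` {u, w, v} \<and> att G (mate G d) \<in> Some ` {u, w, v})},
      mate = mate G,
      att = (\<lambda>d. if att G d \<in> Some ` {u, w, v} then None else att G d) \<rparr>"

definition is_negator :: "('d,'v) mpole \<Rightarrow> 'd \<Rightarrow> 'd \<Rightarrow> 'd \<Rightarrow> 'd \<Rightarrow> 'd \<Rightarrow> bool" where
  "is_negator N i1 i2 o1 o2 r \<longleftrightarrow>
     (\<exists>G u w v. snark G \<and> u \<in> verts G \<and> w \<in> verts G \<and> v \<in> verts G \<and>
        u \<noteq> w \<and> w \<noteq> v \<and> u \<noteq> v \<and> adj G u w \<and> adj G w v \<and>
        N = Neg G u w v \<and>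
        i1 \<noteq> i2 \<and> {d \<in> ends N. att G d = Some u} = {i1, i2} \<and>
        o1 \<noteq> o2 \<and> {d \<in> ends N. att G d = Some v} = {o1, o2} \<and>
        {d \<in> ends N. att G d = Some w} = {r})"

definition perfect_negator :: "('d,'v) mpole \<Rightarrow> 'd \<Rightarrow> 'd \<Rightarrow> 'd \<Rightarrow> 'd \<Rightarrow> 'd \<Rightarrow> bool" where
  "perfect_negator N i1 i2 o1 o2 r \<longleftrightarrow>
     {(\<phi> i1, \<phi> i2, \<phi> o1, \<phi> o2, \<phi> r) | \<phi>. colouring N \<phi>} =
     {(x, x, a, b, a + b) | x a b. x \<in> KK \<and> a \<in> KK \<and> b \<in> KK \<and> a \<noteq> b} \<union>
     {(a, b, x, x, a + b) | x a b. x \<in> KK \<and> a \<in> KK \<and> b \<in> KK \<and> a \<noteq> b}"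

definition is_23pole :: "('d,'v) mpole \<Rightarrow> 'd \<Rightarrow> 'd \<Rightarrow> 'd \<Rightarrow> 'd \<Rightarrow> 'd \<Rightarrow> bool" where
  "is_23pole T b1 b2 c1 c2 c3 \<longleftrightarrow> mpole_wf T \<and>
     distinct [b1, b2, c1, c2, c3] \<and> semiedges T = {b1, b2, c1, c2, c3}"

definition proper_23pole :: "('d,'v) mpole \<Rightarrow> 'd \<Rightarrow> 'd \<Rightarrow> 'd \<Rightarrow> 'd \<Rightarrow> 'd \<Rightarrow> bool" where
  "proper_23pole T b1 b2 c1 c2 c3 \<longleftrightarrow> is_23pole T b1 b2 c1 c2 c3 \<and>
     (\<forall>\<phi>. colouring T \<phi> \<longrightarrow> \<phi> b1 + \<phi> b2 \<noteq> 0 \<and> \<phi> c1 + \<phi> c2 + \<phi> c3 \<noteq> 0)"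

definition perfect_23pole :: "('d,'v) mpole \<Rightarrow> 'd \<Rightarrow> 'd \<Rightarrow> 'd \<Rightarrow> 'd \<Rightarrow> 'd \<Rightarrow> bool" where
  "perfect_23pole T b1 b2 c1 c2 c3 \<longleftrightarrow>
     {(\<phi> b1, \<phi> b2, \<phi> c1, \<phi> c2, \<phi> c3) | \<phi>. colouring T \<phi>} =
     {(x1, x2, y1, y2, y3) | x1 x2 y1 y2 y3.
        x1 \<in> KK \<and> x2 \<in> KK \<and> y1 \<in> KK \<and> y2 \<in> KK \<and> y3 \<in> KK \<and>
        x1 + x2 = y1 + y2 + y3 \<and> x1 + x2 \<noteq> 0}"

datatype ('a, 'b) ntend = NE 'a | TE 'b | Pn | Qn
datatype ('u, 'x) ntvert = NV 'u | TV 'x | Vn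

definition mp_sum :: "('a,'u) mpole \<Rightarrow> ('b,'x) mpole \<Rightarrow> (('a,'b) ntend, ('u,'x) ntvert) mpole" where
  "mp_sum N T =
    \<lparr> verts = NV ` verts N \<union> TV ` verts T,
      ends = NE ` ends N \<union> TE ` ends T,
      mate = (\<lambda>d. case d of NE a \<Rightarrow> NE (mate N a) | TE b \<Rightarrow> TE (mate T b) | Pn \<Rightarrow> Pn | Qn \<Rightarrow> Qn),
      att = (\<lambda>d. case d of NE a \<Rightarrow> map_option NV (att N a) | TE b \<Rightarrow> map_option TV (att T b)
                 | Pn \<Rightarrow> None | Qn \<Rightarrow> None) \<rparr>"

definition junction :: "('d,'v) mpole \<Rightarrow> 'd \<Rightarrow> 'd \<Rightarrow> ('d,'v) mpole" where
  "junction M x y = M\<lparr> ends := ends M - {x, y},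
     mate := (\<lambda>z. if z = mate M x then mate M y else if z = mate M y then mate M x else mate M z) \<rparr>"

text \<open>Subdivide the edge whose free end is c by the new vertex Vn (new ends Pn, Qn at Vn,
  Pn joined to the old partner of c, Qn joined to c), and attach the semiedge r to Vn.\<close>
definition subdiv_attach :: "(('a,'b) ntend, ('u,'x) ntvert) mpole \<Rightarrow> ('a,'b) ntend \<Rightarrow> ('a,'b) ntend
    \<Rightarrow> (('a,'b) ntend, ('u,'x) ntvert) mpole" where
  "subdiv_attach M c r = M\<lparr> verts := verts M \<union> {Vn},
     ends := ends M \<union> {Pn, Qn},
     mate := (mate M)(mate M c := Pn, Pn := mate M c, c := Qn, Qn := c),
     att := (att M)(Pn := Some Vn, Qn := Some Vn, r := Some Vn) \<rparr>"

definition NT :: "('a,'u) mpole \<Rightarrow> ('b,'x) mpole \<Rightarrow> 'a \<Rightarrow> 'a \<Rightarrow> 'a \<Rightarrow> 'b \<Rightarrow> 'b \<Rightarrow> 'b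
    \<Rightarrow> (('a,'b) ntend, ('u,'x) ntvert) mpole" where
  "NT N T o1 o2 r b1 b2 c3 =
     subdiv_attach (junction (junction (mp_sum N T) (NE o1) (TE b1)) (NE o2) (TE b2)) (TE c3) (NE r)"

end

(* A colouring of NT(N, T) restricts, after undoing the subdivision and the two junctions,
   to colourings psi of N and chi of T agreeing on O = B.  As T is proper, chi b1 <> chi b2, so
   the O-pair of N is coloured differently; if the I-pair were too, colouring the two deleted
   path edges u-w and w-v by psi i1 + psi i2 and psi o1 + psi o2 would extend psi to a colouring
   of the snark.  Hence psi i1 = psi i2, and the Parity Lemma applied to N, to T and to the new
   vertex gives phi e1 + phi e2 + phi e3 = 0.  Conversely, for a + b + c = 0 and any c' <> c,
   perfection yields colourings (x, x, c, c', c + c') of N and (c, c', a, b, c') of T, which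
   glue along O = B; putting c on the free end of the subdivided edge completes the colouring. *)

theory Submission
  imports Defs "HOL-Library.Disjoint_Sets"
begin

lemma colour_add_self [simp]: "(x::colour) + x = 0"
  by (cases x) (simp add: zero_prod_def)

lemma colour_add_self_left [simp]: "(x::colour) + (x + y) = y"
  by (simp add: add.assoc[symmetric])

lemma colour_add_eq_0_iff: "(x::colour) + y = 0 \<longleftrightarrow> x = y"
  by (metis add.assoc add_0 colour_add_self)

lemma KK_eq: "KK = - {0}"
proof -
  have "(x::colour) \<in> {(0,1), (1,0), (1,1)} \<longleftrightarrow> x \<noteq> 0" for x
    by (cases x) (auto simp: zero_prod_def elim: bit.exhaust)
  then show ?thesis
    unfolding KK_def by auto
qed

lemma KK_add_distinct:
  assumes "x \<in> KK" "y \<in> KK" "x \<noteq> y"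
  shows "x + y \<in> KK" "distinct [x, y, x + y]"
  using assms unfolding KK_def by (auto simp: zero_prod_def)

lemma KK_add_distinct_three:
  assumes "x \<in> KK" "y \<in> KK" "z \<in> KK" "distinct [x, y, z]"
  shows "x + y + z = 0"
  using assms unfolding KK_def by (auto simp: zero_prod_def)

lemma KK_exists_other: "c \<in> KK \<Longrightarrow> \<exists>c' \<in> KK. c' \<noteq> c"
  unfolding KK_def by auto

section \<open>The Parity Lemma\<close>

lemma mpole_wfD:
  assumes "mpole_wf M"
  shows "finite (verts M)" "finite (ends M)"
    and "d \<in> ends M \<Longrightarrow> mate M d \<in> ends M" "d \<in> ends M \<Longrightarrow> mate M d \<noteq> d"
    and "d \<in> ends M \<Longrightarrow> mate M (mate M d) = d"
    and "d \<in> ends M \<Longrightarrow> att M d = Some v \<Longrightarrow> v \<in> verts M"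
    and "v \<in> verts M \<Longrightarrow> card (ends_at M v) = 3"
  using assms by (simp_all add: mpole_wf_def)

lemma ends_at_eq_if_subset:
  assumes "mpole_wf M" "x \<in> verts M" "{a, b, c} \<subseteq> ends_at M x" "distinct [a, b, c]"
  shows "ends_at M x = {a, b, c}"
proof -
  have "finite (ends_at M x)"
    using mpole_wfD(2)[OF assms(1)] by (simp add: ends_at_def)
  moreover have "card {a, b, c} = card (ends_at M x)"
    using assms(4) mpole_wfD(7)[OF assms(1,2)] by simp
  ultimately show ?thesis
    using assms(3) card_subset_eq by metis
qed

lemma sum_eq_0_if_inj_on_KK:
  assumes "inj_on \<phi> A" "card A = 3" "\<phi> ` A \<subseteq> KK"
  shows "sum \<phi> A = (0::colour)"
proof -
  obtain x y z where A: "A = {x, y, z}" "distinct [x, y, z]"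
    using assms(2) by (auto simp: card_3_iff)
  have "distinct [\<phi> x, \<phi> y, \<phi> z]"
    using assms(1) A by (auto simp: inj_on_def)
  then show ?thesis
    using A assms(3) KK_add_distinct_three by (simp add: add.assoc)
qed

lemma colouring_semiedges_sum_eq_0:
  assumes wf: "mpole_wf M" and col: "colouring M \<phi>"
  shows "sum \<phi> (semiedges M) = 0"
proof -
  have fin: "finite (ends M)" "finite (verts M)"
    using wf by (auto simp: mpole_wf_def)
  have ends_sum: "sum \<phi> (ends M) = 0"
    by (rule sum_involution_eq_0[where h = "mate M"])
      (use wf col in \<open>auto simp: mpole_wf_def colouring_def\<close>)
  have vertex_sum: "sum \<phi> (ends_at M v) = 0" if "v \<in> verts M" for v
    by (rule sum_eq_0_if_inj_on_KK) (use wf col that in \<open>auto simp: mpole_wf_def colouring_def ends_at_def\<close>)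
  have ends_split: "ends M = semiedges M \<union> (\<Union>v\<in>verts M. ends_at M v)"
    using wf by (auto simp: mpole_wf_def semiedges_def ends_at_def) (metis option.exhaust)
  have "sum \<phi> (\<Union>v\<in>verts M. ends_at M v) = (\<Sum>v\<in>verts M. sum \<phi> (ends_at M v))"
    by (rule sum.UNION_disjoint) (use fin in \<open>auto simp: ends_at_def\<close>)
  also have "\<dots> = 0"
    using vertex_sum by simp
  finally have "sum \<phi> (\<Union>v\<in>verts M. ends_at M v) = 0" .
  moreover have "sum \<phi> (ends M) = sum \<phi> (semiedges M) + sum \<phi> (\<Union>v\<in>verts M. ends_at M v)"
    by (subst ends_split, rule sum.union_disjoint) (use fin in \<open>auto simp: semiedges_def ends_at_def\<close>)
  ultimately show ?thesis
    using ends_sum by simp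
qed

lemma colouring_five_semiedges_sum:
  assumes "mpole_wf M" "colouring M \<phi>" "semiedges M = {a1, a2, a3, a4, a5}"
    "distinct [a1, a2, a3, a4, a5]"
  shows "\<phi> a1 + \<phi> a2 + \<phi> a3 + \<phi> a4 + \<phi> a5 = 0"
  using colouring_semiedges_sum_eq_0[OF assms(1,2)] assms(3,4) by (simp add: add.assoc)

lemma junction_simps [simp]:
  "verts (junction M x y) = verts M"
  "ends (junction M x y) = ends M - {x, y}"
  "att (junction M x y) = att M"
  "mate (junction M x y) z =
     (if z = mate M x then mate M y else if z = mate M y then mate M x else mate M z)"
  by (simp_all add: junction_def)

lemma ends_at_junction [simp]: "ends_at (junction M x y) v = ends_at M v - {x, y}"
  by (auto simp: ends_at_def)

lemma semiedges_junction [simp]: "semiedges (junction M x y) = semiedges M - {x, y}"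
  by (auto simp: semiedges_def)

lemma mpole_wf_junction:
  assumes wf: "mpole_wf M" and xy: "x \<in> semiedges M" "y \<in> semiedges M" "x \<noteq> y" "mate M x \<noteq> y"
  shows "mpole_wf (junction M x y)"
proof -
  have "ends_at M v - {x, y} = ends_at M v" for v
    using xy by (auto simp: ends_at_def semiedges_def)
  moreover have "mate M y \<noteq> x"
    using wf xy by (metis mpole_wf_def semiedges_def mem_Collect_eq)
  ultimately show ?thesis
    using wf xy by (auto simp: mpole_wf_def semiedges_def) metis+
qed

lemma colouring_junctionI:
  assumes "x \<in> ends M" "y \<in> ends M" "colouring M \<phi>" "\<phi> x = \<phi> y"
  shows "colouring (junction M x y) \<phi>"
  using assms by (auto simp: colouring_def intro: inj_on_subset)

lemma colouring_junctionD:
  assumes wf: "mpole_wf M" and xy: "x \<in> semiedges M" "y \<in> semiedges M" "x \<noteq> y" "mate M x \<noteq> y"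
    and col: "colouring (junction M x y) \<phi>"
  shows "colouring M (\<phi>(x := \<phi> (mate M x), y := \<phi> (mate M x)))"
proof -
  have mate_x: "mate M x \<in> ends M" "mate M x \<notin> {x, y}" "mate M (mate M x) = x"
    using wf xy by (auto simp: mpole_wf_def semiedges_def)
  have mate_y: "mate M y \<in> ends M" "mate M y \<notin> {x, y}" "mate M (mate M y) = y"
    using wf xy mate_x by (auto simp: mpole_wf_def semiedges_def)
  have "\<phi> (mate M y) = \<phi> (mate M x)"
    using col mate_x(1,2) by (auto simp: colouring_def dest!: bspec[where x = "mate M x"])
  define \<psi> where "\<psi> = \<phi>(x := \<phi> (mate M x), y := \<phi> (mate M x))"
  have col_junction: "\<phi> d \<in> KK" "\<phi> (mate (junction M x y) d) = \<phi> d" if "d \<in> ends M - {x, y}" for d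
    using col that by (auto simp: colouring_def simp del: junction_simps(4))
  have mate_x_notin: "mate M x \<noteq> x" "mate M x \<noteq> y" and mate_y_notin: "mate M y \<noteq> x" "mate M y \<noteq> y"
    using mate_x(2) mate_y(2) by simp_all
  have \<psi>_mate_x: "\<psi> (mate M x) = \<phi> (mate M x)"
    unfolding \<psi>_def using mate_x_notin by simp
  have \<psi>_mate_y: "\<psi> (mate M y) = \<phi> (mate M x)"
    unfolding \<psi>_def using mate_y_notin \<open>\<phi> (mate M y) = \<phi> (mate M x)\<close> by simp
  have \<psi>_xy: "\<psi> x = \<phi> (mate M x)" "\<psi> y = \<phi> (mate M x)"
    unfolding \<psi>_def by simp_all
  have KK_mate_x: "\<phi> (mate M x) \<in> KK"
    by (rule col_junction(1)) (simp add: mate_x(1) mate_x_notin)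
  have edges: "\<psi> d \<in> KK \<and> \<psi> (mate M d) = \<psi> d" if d: "d \<in> ends M" for d
  proof -
    consider "d = x" | "d = y" | "d = mate M x" | "d = mate M y" | "d \<notin> {x, y, mate M x, mate M y}"
      by blast
    then show ?thesis
    proof cases
      case 5
      have mate_d: "mate M d \<in> ends M" "mate M (mate M d) = d"
        using wf d by (simp_all add: mpole_wf_def)
      then have "mate M d \<noteq> x" "mate M d \<noteq> y"
        using 5 by (metis insert_iff)+
      then have "\<psi> (mate M d) = \<phi> (mate M d)" "\<psi> d = \<phi> d"
        using 5 by (simp_all add: \<psi>_def)
      moreover have "mate (junction M x y) d = mate M d"
        using 5 by simp
      ultimately show ?thesis
        using col_junction[of d] d 5 by simp
    qed (simp_all add: \<psi>_mate_x \<psi>_mate_y \<psi>_xy KK_mate_x mate_x(3) mate_y(3))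
  qed
  have ends_at_free: "ends_at M v \<inter> {x, y} = {}" for v
    using xy by (auto simp: ends_at_def semiedges_def)
  have vertices: "inj_on \<psi> (ends_at M v)" if "v \<in> verts M" for v
  proof -
    have "inj_on \<phi> (ends_at (junction M x y) v)"
      using col that by (simp add: colouring_def del: ends_at_junction)
    then have "inj_on \<phi> (ends_at M v)"
      by (metis Diff_triv ends_at_free ends_at_junction)
    moreover have "\<psi> d = \<phi> d" if "d \<in> ends_at M v" for d
      using that ends_at_free[of v] by (auto simp: \<psi>_def)
    ultimately show ?thesis
      using inj_on_cong by blast
  qed
  show ?thesis
    unfolding colouring_def \<psi>_def[symmetric] using edges vertices by blast
qed

lemma subdiv_attach_simps [simp]:
  "verts (subdiv_attach M c r) = verts M \<union> {Vn}"
  "ends (subdiv_attach M c r) = ends M \<union> {Pn, Qn}"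
  "mate (subdiv_attach M c r) = (mate M)(mate M c := Pn, Pn := mate M c, c := Qn, Qn := c)"
  "att (subdiv_attach M c r) = (att M)(Pn := Some Vn, Qn := Some Vn, r := Some Vn)"
  by (simp_all add: subdiv_attach_def)

context
  fixes M :: "(('a, 'b) ntend, ('u, 'x) ntvert) mpole" and c r :: "('a, 'b) ntend"
  assumes wf: "mpole_wf M" and c: "c \<in> semiedges M" and r: "r \<in> semiedges M" and "c \<noteq> r"
    and fresh: "Pn \<notin> ends M" "Qn \<notin> ends M" "Vn \<notin> verts M"
begin

lemma subdiv_attach_distinct_ends [simp]:
  "c \<noteq> Pn" "c \<noteq> Qn" "r \<noteq> Pn" "r \<noteq> Qn" "c \<noteq> r" "mate M c \<noteq> Pn" "mate M c \<noteq> Qn" "mate M c \<noteq> c"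
  using wf c r fresh \<open>c \<noteq> r\<close> by (auto simp: semiedges_def mpole_wf_def)

declare subdiv_attach_distinct_ends [symmetric, simp]

lemma ends_at_subdiv_attach_new: "ends_at (subdiv_attach M c r) Vn = {Pn, Qn, r}"
  using wf r fresh by (auto simp: ends_at_def semiedges_def mpole_wf_def)

lemma ends_at_subdiv_attach_old: "v \<noteq> Vn \<Longrightarrow> ends_at (subdiv_attach M c r) v = ends_at M v"
  using r fresh by (auto simp: ends_at_def semiedges_def)

lemma colouring_subdiv_attach_new_vertex:
  assumes "colouring (subdiv_attach M c r) \<phi>"
  shows "\<phi> Pn + \<phi> c + \<phi> r = 0"
proof -
  have "\<phi> Qn = \<phi> c" "\<phi> Pn \<in> KK" "\<phi> Qn \<in> KK" "\<phi> r \<in> KK"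
    using assms r by (auto simp: colouring_def semiedges_def dest!: bspec[where x = c])
  moreover have "inj_on \<phi> {Pn, Qn, r}"
    using assms by (simp add: colouring_def ends_at_subdiv_attach_new del: subdiv_attach_simps(2-4))
  then have "distinct [\<phi> Pn, \<phi> Qn, \<phi> r]"
    by (auto simp: inj_on_def)
  ultimately show ?thesis
    using KK_add_distinct_three by simp
qed

lemma colouring_subdiv_attachD:
  assumes col: "colouring (subdiv_attach M c r) \<phi>"
  shows "colouring M (\<phi>(c := \<phi> Pn))"
proof -
  define \<psi> where "\<psi> = \<phi>(c := \<phi> Pn)"
  have col_edge: "\<phi> d \<in> KK" "\<phi> (mate (subdiv_attach M c r) d) = \<phi> d"
    if "d \<in> ends M \<union> {Pn, Qn}" for d
    using col that by (auto simp: colouring_def simp del: subdiv_attach_simps(3))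
  have mate_c: "mate M c \<in> ends M" "mate M (mate M c) = c" "\<phi> (mate M c) = \<phi> Pn"
    using wf c col_edge(2)[of "mate M c"] by (auto simp: mpole_wf_def semiedges_def)
  have edges: "\<psi> d \<in> KK \<and> \<psi> (mate M d) = \<psi> d" if d: "d \<in> ends M" for d
  proof -
    consider "d = c" | "d = mate M c" | "d \<notin> {c, mate M c}"
      by blast
    then show ?thesis
    proof cases
      case 3
      have "mate M d \<in> ends M" "mate M (mate M d) = d" "d \<noteq> Pn" "d \<noteq> Qn"
        using wf d fresh by (auto simp: mpole_wf_def)
      then have "mate M d \<noteq> c"
        using 3 by auto
      then show ?thesis
        using col_edge[of d] d 3 \<open>d \<noteq> Pn\<close> \<open>d \<noteq> Qn\<close> by (simp add: \<psi>_def)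
    qed (use col_edge(1)[of Pn] mate_c in \<open>simp_all add: \<psi>_def\<close>)
  qed
  have vertices: "inj_on \<psi> (ends_at M v)" if "v \<in> verts M" for v
  proof -
    have "v \<noteq> Vn"
      using that fresh by auto
    have "inj_on \<phi> (ends_at (subdiv_attach M c r) v)"
      using col that by (simp add: colouring_def del: subdiv_attach_simps(2-4))
    then have "inj_on \<phi> (ends_at M v)"
      by (simp only: ends_at_subdiv_attach_old[OF \<open>v \<noteq> Vn\<close>])
    moreover have "\<psi> d = \<phi> d" if "d \<in> ends_at M v" for d
      using that c by (auto simp: \<psi>_def ends_at_def semiedges_def)
    ultimately show ?thesis
      using inj_on_cong by blast
  qed
  show ?thesis
    unfolding colouring_def \<psi>_def[symmetric] using edges vertices by blast
qed

lemma colouring_subdiv_attachI: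
  assumes col: "colouring M \<psi>" and q: "q \<in> KK" "distinct [\<psi> c, q, \<psi> r]"
  shows "colouring (subdiv_attach M c r) (\<psi>(Pn := \<psi> c, Qn := q, c := q))"
proof -
  define \<phi> where "\<phi> = \<psi>(Pn := \<psi> c, Qn := q, c := q)"
  have col_edge: "\<psi> d \<in> KK" "\<psi> (mate M d) = \<psi> d" if "d \<in> ends M" for d
    using col that by (auto simp: colouring_def)
  have mate_c: "mate M c \<in> ends M" "mate M (mate M c) = c"
    using wf c by (auto simp: mpole_wf_def semiedges_def)
  have edges: "\<phi> d \<in> KK \<and> \<phi> (mate (subdiv_attach M c r) d) = \<phi> d"
    if d: "d \<in> ends (subdiv_attach M c r)" for d
  proof -
    consider "d = Pn" | "d = Qn" | "d = c" | "d = mate M c" | "d \<in> ends M" "d \<notin> {c, mate M c}"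
      using d by auto
    then show ?thesis
    proof cases
      case 5
      have "mate M d \<in> ends M" "mate M (mate M d) = d" "d \<noteq> Pn" "d \<noteq> Qn"
        using wf 5 fresh by (auto simp: mpole_wf_def)
      then have "mate M d \<noteq> c" "mate M d \<noteq> Pn" "mate M d \<noteq> Qn"
        using 5 fresh by auto
      then show ?thesis
        using col_edge[of d] 5 \<open>d \<noteq> Pn\<close> \<open>d \<noteq> Qn\<close> by (simp add: \<phi>_def)
    qed (use col_edge[of c] c mate_c q in \<open>simp_all add: \<phi>_def semiedges_def\<close>)
  qed
  have vertices: "inj_on \<phi> (ends_at (subdiv_attach M c r) v)" if "v \<in> verts (subdiv_attach M c r)" for v
  proof (cases "v = Vn")
    case True
    then show ?thesis
      using q by (simp add: ends_at_subdiv_attach_new \<phi>_def)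
  next
    case False
    then have "v \<in> verts M"
      using that by simp
    then have "inj_on \<psi> (ends_at M v)"
      using col by (simp add: colouring_def)
    moreover have "\<phi> d = \<psi> d" if "d \<in> ends_at M v" for d
      using that c fresh by (auto simp: \<phi>_def ends_at_def semiedges_def)
    ultimately show ?thesis
      using False inj_on_cong by (metis ends_at_subdiv_attach_old)
  qed
  show ?thesis
    unfolding colouring_def \<phi>_def[symmetric] using edges vertices by blast
qed

end

lemma mp_sum_simps [simp]:
  "verts (mp_sum N T) = NV ` verts N \<union> TV ` verts T"
  "ends (mp_sum N T) = NE ` ends N \<union> TE ` ends T"
  "mate (mp_sum N T) (NE a) = NE (mate N a)"
  "mate (mp_sum N T) (TE b) = TE (mate T b)"
  "att (mp_sum N T) (NE a) = map_option NV (att N a)"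
  "att (mp_sum N T) (TE b) = map_option TV (att T b)"
  by (simp_all add: mp_sum_def)

lemma ends_at_mp_sum [simp]:
  "ends_at (mp_sum N T) (NV v) = NE ` ends_at N v"
  "ends_at (mp_sum N T) (TV w) = TE ` ends_at T w"
  by (auto simp: ends_at_def)

lemma semiedges_mp_sum [simp]: "semiedges (mp_sum N T) = NE ` semiedges N \<union> TE ` semiedges T"
  by (auto simp: semiedges_def)

lemma mpole_wf_mp_sum:
  assumes N: "mpole_wf N" and T: "mpole_wf T"
  shows "mpole_wf (mp_sum N T)"
  unfolding mpole_wf_def
proof (intro conjI ballI allI impI)
  show "finite (verts (mp_sum N T))" "finite (ends (mp_sum N T))"
    using mpole_wfD(1,2)[OF N] mpole_wfD(1,2)[OF T] by simp_all
next
  fix d assume "d \<in> ends (mp_sum N T)"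
  then show "mate (mp_sum N T) d \<in> ends (mp_sum N T)" "mate (mp_sum N T) d \<noteq> d"
    "mate (mp_sum N T) (mate (mp_sum N T) d) = d"
    using mpole_wfD(3-5)[OF N] mpole_wfD(3-5)[OF T] by auto
next
  fix d x assume "d \<in> ends (mp_sum N T)" "att (mp_sum N T) d = Some x"
  then show "x \<in> verts (mp_sum N T)"
    using mpole_wfD(6)[OF N] mpole_wfD(6)[OF T] by auto
next
  fix x assume "x \<in> verts (mp_sum N T)"
  then show "card (ends_at (mp_sum N T) x) = 3"
    using mpole_wfD(7)[OF N] mpole_wfD(7)[OF T] by (auto simp: card_image inj_on_def)
qed

lemma colouring_mp_sumD:
  assumes col: "colouring (mp_sum N T) \<phi>"
  shows "colouring N (\<phi> \<circ> NE)" "colouring T (\<phi> \<circ> TE)"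
proof -
  have edge: "\<phi> d \<in> KK" "\<phi> (mate (mp_sum N T) d) = \<phi> d" if "d \<in> ends (mp_sum N T)" for d
    using col that by (simp_all add: colouring_def del: mp_sum_simps)
  have vertex: "inj_on \<phi> (ends_at (mp_sum N T) x)" if "x \<in> verts (mp_sum N T)" for x
    using col that by (simp add: colouring_def del: mp_sum_simps ends_at_mp_sum)
  have "inj_on (\<phi> \<circ> NE) (ends_at N v)" if "v \<in> verts N" for v
    using vertex[of "NV v"] that by (simp add: comp_inj_on_iff[symmetric] inj_on_def)
  moreover have "inj_on (\<phi> \<circ> TE) (ends_at T v)" if "v \<in> verts T" for v
    using vertex[of "TV v"] that by (simp add: comp_inj_on_iff[symmetric] inj_on_def)
  moreover have "\<phi> (NE a) \<in> KK \<and> \<phi> (NE (mate N a)) = \<phi> (NE a)" if "a \<in> ends N" for a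
    using edge[of "NE a"] that by simp
  moreover have "\<phi> (TE b) \<in> KK \<and> \<phi> (TE (mate T b)) = \<phi> (TE b)" if "b \<in> ends T" for b
    using edge[of "TE b"] that by simp
  ultimately show "colouring N (\<phi> \<circ> NE)" "colouring T (\<phi> \<circ> TE)"
    by (simp_all add: colouring_def)
qed

lemma colouring_mp_sumI:
  assumes "colouring N f" "colouring T g"
  shows "colouring (mp_sum N T) (case_ntend f g p q)"
proof -
  have "inj_on (case_ntend f g p q) (NE ` ends_at N v)" if "v \<in> verts N" for v
    using assms that by (auto simp: colouring_def inj_on_def)
  moreover have "inj_on (case_ntend f g p q) (TE ` ends_at T v)" if "v \<in> verts T" for v
    using assms that by (auto simp: colouring_def inj_on_def)
  ultimately show ?thesis
    using assms by (auto simp: colouring_def)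
qed

section \<open>Negators\<close>

lemma Neg_simps [simp]:
  "verts (Neg G u w v) = verts G - {u, w, v}"
  "ends (Neg G u w v) =
     {d \<in> ends G. \<not> (att G d \<in> Some ` {u, w, v} \<and> att G (mate G d) \<in> Some ` {u, w, v})}"
  "mate (Neg G u w v) = mate G"
  "att (Neg G u w v) d = (if att G d \<in> Some ` {u, w, v} then None else att G d)"
  by (simp_all add: Neg_def)

lemma ends_at_Neg: "x \<in> verts (Neg G u w v) \<Longrightarrow> ends_at (Neg G u w v) x = ends_at G x"
  by (auto simp: ends_at_def)

lemma mpole_wf_Neg:
  assumes wf: "mpole_wf G"
  shows "mpole_wf (Neg G u w v)"
  unfolding mpole_wf_def
proof (intro conjI ballI allI impI)
  show "finite (verts (Neg G u w v))" "finite (ends (Neg G u w v))"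
    using mpole_wfD(1,2)[OF wf] by simp_all
next
  fix d assume "d \<in> ends (Neg G u w v)"
  then show "mate (Neg G u w v) d \<in> ends (Neg G u w v)" "mate (Neg G u w v) d \<noteq> d"
    "mate (Neg G u w v) (mate (Neg G u w v) d) = d"
    using mpole_wfD(3-5)[OF wf] by auto
next
  fix d x assume "d \<in> ends (Neg G u w v)" "att (Neg G u w v) d = Some x"
  then show "x \<in> verts (Neg G u w v)"
    using mpole_wfD(6)[OF wf] by (auto split: if_splits)
next
  fix x assume "x \<in> verts (Neg G u w v)"
  then show "card (ends_at (Neg G u w v) x) = 3"
    using mpole_wfD(7)[OF wf] by (simp add: ends_at_Neg)
qed

locale snark_negator =
  fixes G :: "('d, 'v) mpole" and u w v :: 'v and i1 i2 o1 o2 r :: 'd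
  assumes snark: "snark G"
    and uwv: "u \<in> verts G" "w \<in> verts G" "v \<in> verts G" "u \<noteq> w" "w \<noteq> v" "u \<noteq> v"
    and adj: "adj G u w" "adj G w v"
    and I: "i1 \<noteq> i2" "{d \<in> ends (Neg G u w v). att G d = Some u} = {i1, i2}"
    and O: "o1 \<noteq> o2" "{d \<in> ends (Neg G u w v). att G d = Some v} = {o1, o2}"
    and R: "{d \<in> ends (Neg G u w v). att G d = Some w} = {r}"
begin

abbreviation N where "N \<equiv> Neg G u w v"

lemma wf_G: "mpole_wf G"
  using snark by (simp add: snark_def)

lemma att_G_not_None: "d \<in> ends G \<Longrightarrow> att G d \<noteq> None"
  using snark by (auto simp: snark_def semiedges_def)

lemma semiedges_att:
  "i1 \<in> ends N" "i2 \<in> ends N" "o1 \<in> ends N" "o2 \<in> ends N" "r \<in> ends N"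
  "att G i1 = Some u" "att G i2 = Some u" "att G o1 = Some v" "att G o2 = Some v" "att G r = Some w"
  using I O R by blast+

lemma distinct_semiedges: "distinct [i1, i2, o1, o2, r]"
  using semiedges_att(6-10) I(1) O(1) uwv(4-6) by auto

lemma semiedges_Neg: "semiedges N = {i1, i2, o1, o2, r}"
proof -
  have "att N d = None \<longleftrightarrow> att G d \<in> Some ` {u, w, v}" if "d \<in> ends N" for d
    using att_G_not_None[of d] that by auto
  then have "semiedges N = {d \<in> ends N. att G d \<in> Some ` {u, w, v}}"
    unfolding semiedges_def by blast
  also have "\<dots> = {d \<in> ends N. att G d = Some u} \<union> {d \<in> ends N. att G d = Some v} \<union>
      {d \<in> ends N. att G d = Some w}"
    by auto
  finally show ?thesis
    using I O R by auto
qed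

lemma mate_o1: "mate N o1 \<noteq> o2"
  using semiedges_att by auto

lemma path_ends:
  obtains d1 d2 where
    "ends_at G u = {i1, i2, d1}" "ends_at G w = {r, mate G d1, d2}" "ends_at G v = {o1, o2, mate G d2}"
    "ends G - ends N = {d1, mate G d1, d2, mate G d2}"
    "distinct [d1, mate G d1, d2, mate G d2]"
proof -
  obtain d1 where d1: "d1 \<in> ends G" "att G d1 = Some u" "att G (mate G d1) = Some w"
    using adj(1) by (auto simp: adj_def)
  obtain d2 where d2: "d2 \<in> ends G" "att G d2 = Some w" "att G (mate G d2) = Some v"
    using adj(2) by (auto simp: adj_def)
  have mates: "mate G d1 \<in> ends G" "mate G (mate G d1) = d1" "mate G d2 \<in> ends G" "mate G (mate G d2) = d2"
    using mpole_wfD(3,5)[OF wf_G] d1(1) d2(1) by auto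
  have "mate G d1 \<noteq> d2"
    using d1(2) d2(3) mates(2) uwv(6) by (metis option.inject)
  moreover have "d1 \<noteq> mate G d1" "d1 \<noteq> d2" "d1 \<noteq> mate G d2"
    "mate G d1 \<noteq> mate G d2" "d2 \<noteq> mate G d2"
    using d1(2,3) d2(2,3) uwv(4-6) by (metis option.inject)+
  ultimately have path_distinct: "distinct [d1, mate G d1, d2, mate G d2]"
    by simp
  have path_not_N: "{d1, mate G d1, d2, mate G d2} \<inter> ends N = {}"
    using d1 d2 mates by auto
  have at_u: "ends_at G u = {i1, i2, d1}"
    by (rule ends_at_eq_if_subset[OF wf_G uwv(1)])
      (use semiedges_att I(1) d1 path_not_N in \<open>auto simp: ends_at_def\<close>)
  have at_w: "ends_at G w = {r, mate G d1, d2}"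
    by (rule ends_at_eq_if_subset[OF wf_G uwv(2)])
      (use semiedges_att d1 d2 mates path_distinct path_not_N in \<open>auto simp: ends_at_def\<close>)
  have at_v: "ends_at G v = {o1, o2, mate G d2}"
    by (rule ends_at_eq_if_subset[OF wf_G uwv(3)])
      (use semiedges_att O(1) d2 mates path_not_N in \<open>auto simp: ends_at_def\<close>)
  have "ends G - ends N \<subseteq> ends_at G u \<union> ends_at G w \<union> ends_at G v"
    by (auto simp: ends_at_def)
  then have "ends G - ends N = {d1, mate G d1, d2, mate G d2}"
    unfolding at_u at_w at_v using semiedges_att(1-5) path_not_N d1(1) d2(1) mates(1,3) by blast
  then show ?thesis
    using that at_u at_w at_v path_distinct by simp
qed

lemma colouring_Neg_extends:
  assumes col: "colouring N \<psi>"
    and at: "ends_at G u = {i1, i2, d1}" "ends_at G w = {r, mate G d1, d2}"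
      "ends_at G v = {o1, o2, mate G d2}"
    and path: "ends G - ends N = {d1, mate G d1, d2, mate G d2}" "distinct [d1, mate G d1, d2, mate G d2]"
    and colours: "s \<in> KK" "t \<in> KK" "distinct [\<psi> i1, \<psi> i2, s]" "distinct [\<psi> o1, \<psi> o2, t]"
      "distinct [\<psi> r, s, t]"
  shows "colouring G (\<lambda>d. if d \<in> {d1, mate G d1} then s else if d \<in> {d2, mate G d2} then t else \<psi> d)"
    (is "colouring G ?\<chi>")
proof -
  have wf_N: "mpole_wf N"
    using wf_G by (rule mpole_wf_Neg)
  have \<chi>_N: "?\<chi> d = \<psi> d" if "d \<in> ends N" for d
    using that path(1) by auto
  have edges: "?\<chi> d \<in> KK \<and> ?\<chi> (mate G d) = ?\<chi> d" if d: "d \<in> ends G" for d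
  proof (cases "d \<in> ends N")
    case True
    then have "mate G d \<in> ends N"
      using mpole_wfD(3)[OF wf_N] by simp
    then show ?thesis
      using col True \<chi>_N by (simp add: colouring_def)
  next
    case False
    then have "d \<in> {d1, mate G d1, d2, mate G d2}"
      using d path(1) by blast
    moreover have "mate G (mate G d1) = d1" "mate G (mate G d2) = d2"
      using path(1) mpole_wfD(5)[OF wf_G] by blast+
    ultimately show ?thesis
      using path(2) colours(1,2) by auto
  qed
  have vertices: "inj_on ?\<chi> (ends_at G x)" if x: "x \<in> verts G" for x
  proof -
    have "i1 \<in> ends N" "i2 \<in> ends N" "o1 \<in> ends N" "o2 \<in> ends N" "r \<in> ends N"
      using semiedges_att by blast+
    then have \<chi>_semiedges: "?\<chi> i1 = \<psi> i1" "?\<chi> i2 = \<psi> i2" "?\<chi> o1 = \<psi> o1" "?\<chi> o2 = \<psi> o2" "?\<chi> r = \<psi> r"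
      using \<chi>_N by blast+
    consider "x = u" | "x = w" | "x = v" | "x \<in> verts N"
      using x by auto
    then show ?thesis
    proof cases
      case 4
      then have "inj_on \<psi> (ends_at N x)"
        using col by (simp add: colouring_def del: Neg_simps)
      moreover have "ends_at N x \<subseteq> ends N"
        unfolding ends_at_def by blast
      ultimately have "inj_on ?\<chi> (ends_at N x)"
        using \<chi>_N inj_on_cong[of "ends_at N x" ?\<chi> \<psi>] by blast
      then show ?thesis
        by (simp only: ends_at_Neg[OF 4])
    qed (use at \<chi>_semiedges path(2) colours(3-5) in \<open>auto simp: inj_on_def\<close>)
  qed
  show ?thesis
    unfolding colouring_def using edges vertices by blast
qed

lemma colouring_Neg_pair_eq:
  assumes col: "colouring N \<psi>"
  shows "\<psi> i1 = \<psi> i2 \<or> \<psi> o1 = \<psi> o2"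
proof (rule ccontr)
  assume "\<not> ?thesis"
  then have ni: "\<psi> i1 \<noteq> \<psi> i2" and no: "\<psi> o1 \<noteq> \<psi> o2"
    by blast+
  have KK: "\<psi> i1 \<in> KK" "\<psi> i2 \<in> KK" "\<psi> o1 \<in> KK" "\<psi> o2 \<in> KK" "\<psi> r \<in> KK"
    using col semiedges_att(1-5) by (simp_all add: colouring_def del: Neg_simps)
  define s t where "s = \<psi> i1 + \<psi> i2" and "t = \<psi> o1 + \<psi> o2"
  have s: "s \<in> KK" "distinct [\<psi> i1, \<psi> i2, s]"
    unfolding s_def using KK_add_distinct[OF KK(1,2) ni] .
  have t: "t \<in> KK" "distinct [\<psi> o1, \<psi> o2, t]"
    unfolding t_def using KK_add_distinct[OF KK(3,4) no] .
  have "s + t + \<psi> r = 0"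
    using colouring_five_semiedges_sum[OF mpole_wf_Neg[OF wf_G] col semiedges_Neg distinct_semiedges]
    by (simp add: s_def t_def add.assoc)
  then have r: "\<psi> r = s + t" \<comment> \<open>so the three path edges at w receive distinct colours\<close>
    by (simp add: colour_add_eq_0_iff)
  then have "s \<noteq> t"
    using KK(5) by (auto simp: KK_eq)
  then have "distinct [\<psi> r, s, t]"
    using KK_add_distinct(2)[OF s(1) t(1)] r by auto
  obtain d1 d2 where "ends_at G u = {i1, i2, d1}" "ends_at G w = {r, mate G d1, d2}"
    "ends_at G v = {o1, o2, mate G d2}" "ends G - ends N = {d1, mate G d1, d2, mate G d2}"
    "distinct [d1, mate G d1, d2, mate G d2]"
    by (rule path_ends)
  then have "colouring G (\<lambda>d. if d \<in> {d1, mate G d1} then s else if d \<in> {d2, mate G d2} then t else \<psi> d)"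
    using colouring_Neg_extends col s t \<open>distinct [\<psi> r, s, t]\<close> by blast
  then show False
    using snark by (auto simp: snark_def)
qed

end

lemma is_negatorE:
  assumes "is_negator N i1 i2 o1 o2 r"
  obtains G u w v where "snark_negator G u w v i1 i2 o1 o2 r" "N = Neg G u w v"
  using assms unfolding is_negator_def snark_negator_def by blast

lemma is_negatorD:
  assumes "is_negator N i1 i2 o1 o2 r"
  shows "mpole_wf N" "semiedges N = {i1, i2, o1, o2, r}" "distinct [i1, i2, o1, o2, r]"
    "mate N o1 \<noteq> o2"
proof -
  obtain G u w v where neg: "snark_negator G u w v i1 i2 o1 o2 r" and N: "N = Neg G u w v"
    using assms by (rule is_negatorE)
  show "mpole_wf N"
    unfolding N by (rule mpole_wf_Neg[OF snark_negator.wf_G[OF neg]])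
  show "semiedges N = {i1, i2, o1, o2, r}" "distinct [i1, i2, o1, o2, r]" "mate N o1 \<noteq> o2"
    unfolding N using snark_negator.semiedges_Neg[OF neg] snark_negator.distinct_semiedges[OF neg]
      snark_negator.mate_o1[OF neg] by simp_all
qed

lemma colouring_negator_pair_eq:
  assumes "is_negator N i1 i2 o1 o2 r" "colouring N \<psi>"
  shows "\<psi> i1 = \<psi> i2 \<or> \<psi> o1 = \<psi> o2"
  using assms by (auto elim!: is_negatorE dest: snark_negator.colouring_Neg_pair_eq)

context
  fixes N :: "('a, 'u) mpole" and T :: "('b, 'x) mpole" and o1 o2 r :: 'a and b1 b2 c3 :: 'b
  assumes wf: "mpole_wf N" "mpole_wf T"
    and N_semiedges: "{o1, o2, r} \<subseteq> semiedges N" "distinct [o1, o2, r]" "mate N o1 \<noteq> o2"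
    and T_semiedges: "{b1, b2, c3} \<subseteq> semiedges T" "distinct [b1, b2, c3]"
begin

abbreviation junction1 where "junction1 \<equiv> junction (mp_sum N T) (NE o1) (TE b1)"
abbreviation junction2 where "junction2 \<equiv> junction junction1 (NE o2) (TE b2)"

lemma NT_stages:
  shows "NT N T o1 o2 r b1 b2 c3 = subdiv_attach junction2 (TE c3) (NE r)"
    and "mpole_wf (mp_sum N T)" "NE o1 \<in> semiedges (mp_sum N T)" "TE b1 \<in> semiedges (mp_sum N T)"
    and "mpole_wf junction1" "NE o2 \<in> semiedges junction1" "TE b2 \<in> semiedges junction1"
      "mate junction1 (NE o2) \<noteq> TE b2"
    and "mpole_wf junction2" "TE c3 \<in> semiedges junction2" "NE r \<in> semiedges junction2"
      "TE c3 \<noteq> NE r" "Pn \<notin> ends junction2" "Qn \<notin> ends junction2" "Vn \<notin> verts junction2"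
proof -
  show "NT N T o1 o2 r b1 b2 c3 = subdiv_attach junction2 (TE c3) (NE r)"
    unfolding NT_def ..
  show wf0: "mpole_wf (mp_sum N T)"
    using wf by (rule mpole_wf_mp_sum)
  show sem0: "NE o1 \<in> semiedges (mp_sum N T)" "TE b1 \<in> semiedges (mp_sum N T)"
    using N_semiedges(1) T_semiedges(1) by auto
  show wf1: "mpole_wf junction1"
    by (rule mpole_wf_junction[OF wf0 sem0]) simp_all
  show sem1: "NE o2 \<in> semiedges junction1" "TE b2 \<in> semiedges junction1"
    using N_semiedges(1,2) T_semiedges(1,2) by auto
  show mate1: "mate junction1 (NE o2) \<noteq> TE b2"
    using N_semiedges(3) by simp
  show "mpole_wf junction2"
    by (rule mpole_wf_junction[OF wf1 sem1 _ mate1]) simp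
  show "TE c3 \<in> semiedges junction2" "NE r \<in> semiedges junction2" "TE c3 \<noteq> NE r"
    using N_semiedges(1,2) T_semiedges(1,2) by auto
  show "Pn \<notin> ends junction2" "Qn \<notin> ends junction2" "Vn \<notin> verts junction2"
    by auto
qed

lemma colouring_NTD:
  assumes col: "colouring (NT N T o1 o2 r b1 b2 c3) \<phi>"
  obtains \<psi> \<chi> where "colouring N \<psi>" "colouring T \<chi>" "\<psi> o1 = \<chi> b1" "\<psi> o2 = \<chi> b2"
    "\<And>a. a \<notin> {o1, o2} \<Longrightarrow> \<psi> a = \<phi> (NE a)" "\<And>b. b \<notin> {b1, b2, c3} \<Longrightarrow> \<chi> b = \<phi> (TE b)"
    "\<chi> c3 + \<phi> (TE c3) + \<psi> r = 0"
proof -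
  note stages = NT_stages
  have col3: "colouring (subdiv_attach junction2 (TE c3) (NE r)) \<phi>"
    using col stages(1) by simp
  define \<phi>2 where "\<phi>2 = \<phi>(TE c3 := \<phi> Pn)"
  define \<phi>1 where "\<phi>1 = \<phi>2(NE o2 := \<phi>2 (mate junction1 (NE o2)), TE b2 := \<phi>2 (mate junction1 (NE o2)))"
  define \<phi>0 where "\<phi>0 = \<phi>1(NE o1 := \<phi>1 (NE (mate N o1)), TE b1 := \<phi>1 (NE (mate N o1)))"
  have "colouring junction2 \<phi>2"
    unfolding \<phi>2_def using colouring_subdiv_attachD[OF stages(9-15) col3] .
  then have "colouring junction1 \<phi>1"
    unfolding \<phi>1_def using colouring_junctionD[OF stages(5-7) _ stages(8)] by simp
  then have "colouring (mp_sum N T) \<phi>0"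
    unfolding \<phi>0_def using colouring_junctionD[OF stages(2-4)] by simp
  then have "colouring N (\<phi>0 \<circ> NE)" "colouring T (\<phi>0 \<circ> TE)"
    by (rule colouring_mp_sumD)+
  moreover have "\<phi> Pn + \<phi> (TE c3) + \<phi> (NE r) = 0"
    using colouring_subdiv_attach_new_vertex[OF stages(9-15) col3] .
  ultimately show ?thesis
    using that N_semiedges(2) T_semiedges(2) by (auto simp: \<phi>0_def \<phi>1_def \<phi>2_def)
qed

lemma colouring_NTI:
  assumes "colouring N \<psi>" "colouring T \<chi>" "\<psi> o1 = \<chi> b1" "\<psi> o2 = \<chi> b2"
    and "q \<in> KK" "distinct [\<chi> c3, q, \<psi> r]"
  shows "colouring (NT N T o1 o2 r b1 b2 c3) ((case_ntend \<psi> \<chi> (\<chi> c3) q)(TE c3 := q))"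
proof -
  note stages = NT_stages
  define \<phi> where "\<phi> = case_ntend \<psi> \<chi> (\<chi> c3) q"
  have "colouring (mp_sum N T) \<phi>"
    unfolding \<phi>_def using assms(1,2) by (rule colouring_mp_sumI)
  then have "colouring junction1 \<phi>"
    by (rule colouring_junctionI[rotated 2])
      (use assms(3) stages(3,4) in \<open>auto simp: \<phi>_def semiedges_def\<close>)
  then have "colouring junction2 \<phi>"
    by (rule colouring_junctionI[rotated 2])
      (use assms(4) stages(6,7) in \<open>auto simp: \<phi>_def semiedges_def\<close>)
  then have "colouring (subdiv_attach junction2 (TE c3) (NE r)) (\<phi>(Pn := \<phi> (TE c3), Qn := q, TE c3 := q))"
    using assms(5,6) by (intro colouring_subdiv_attachI[OF stages(9-15)]) (simp_all add: \<phi>_def)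
  moreover have "\<phi>(Pn := \<phi> (TE c3), Qn := q, TE c3 := q) = \<phi>(TE c3 := q)"
    by (auto simp: \<phi>_def fun_eq_iff split: ntend.split)
  ultimately show ?thesis
    using stages(1) by (simp add: \<phi>_def)
qed

end

lemma negator_23pole_NT_hyps:
  assumes "is_negator N i1 i2 o1 o2 r" "is_23pole T b1 b2 c1 c2 c3"
  shows "mpole_wf N" "mpole_wf T" "{o1, o2, r} \<subseteq> semiedges N" "distinct [o1, o2, r]"
    "mate N o1 \<noteq> o2" "{b1, b2, c3} \<subseteq> semiedges T" "distinct [b1, b2, c3]"
  using is_negatorD[OF assms(1)] assms(2) by (auto simp: is_23pole_def)

lemma colouring_NT_constraints:
  assumes neg: "is_negator N i1 i2 o1 o2 r" and T: "proper_23pole T b1 b2 c1 c2 c3"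
    and col: "colouring (NT N T o1 o2 r b1 b2 c3) \<phi>"
  shows "\<phi> (NE i1) = \<phi> (NE i2) \<and> \<phi> (TE c1) + \<phi> (TE c2) + \<phi> (TE c3) = 0"
proof -
  have T23: "is_23pole T b1 b2 c1 c2 c3"
    using T by (simp add: proper_23pole_def)
  obtain \<psi> \<chi> where \<psi>: "colouring N \<psi>" and \<chi>: "colouring T \<chi>"
    and junctions: "\<psi> o1 = \<chi> b1" "\<psi> o2 = \<chi> b2"
    and \<psi>_NE: "\<And>a. a \<notin> {o1, o2} \<Longrightarrow> \<psi> a = \<phi> (NE a)"
    and \<chi>_TE: "\<And>b. b \<notin> {b1, b2, c3} \<Longrightarrow> \<chi> b = \<phi> (TE b)"
    and vertex: "\<chi> c3 + \<phi> (TE c3) + \<psi> r = 0"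
    using colouring_NTD[OF negator_23pole_NT_hyps[OF neg T23] col] by blast
  have "\<chi> b1 + \<chi> b2 \<noteq> 0"
    using T \<chi> by (simp add: proper_23pole_def)
  then have "\<psi> i1 = \<psi> i2"
    using colouring_negator_pair_eq[OF neg \<psi>] junctions by (auto simp: colour_add_eq_0_iff)
  have "\<psi> i1 + \<psi> i2 + \<psi> o1 + \<psi> o2 + \<psi> r = 0"
    using colouring_five_semiedges_sum[OF is_negatorD(1)[OF neg] \<psi> is_negatorD(2,3)[OF neg]] .
  moreover have "\<chi> b1 + \<chi> b2 + \<chi> c1 + \<chi> c2 + \<chi> c3 = 0"
    using colouring_five_semiedges_sum[OF _ \<chi>] T23 by (simp add: is_23pole_def)
  moreover have "\<chi> c1 + \<chi> c2 + \<phi> (TE c3) =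
      (\<psi> i1 + \<psi> i2 + \<psi> o1 + \<psi> o2 + \<psi> r) + (\<chi> b1 + \<chi> b2 + \<chi> c1 + \<chi> c2 + \<chi> c3) +
      (\<chi> c3 + \<phi> (TE c3) + \<psi> r)"
    using \<open>\<psi> i1 = \<psi> i2\<close> junctions by (simp add: add_ac)
  ultimately have "\<chi> c1 + \<chi> c2 + \<phi> (TE c3) = 0"
    using vertex by simp
  then show ?thesis
    using \<open>\<psi> i1 = \<psi> i2\<close> \<psi>_NE \<chi>_TE is_negatorD(3)[OF neg] T23 by (auto simp: is_23pole_def)
qed

lemma colouring_NT_exists:
  assumes neg: "is_negator N i1 i2 o1 o2 r" and T23: "is_23pole T b1 b2 c1 c2 c3"
    and perfect: "perfect_negator N i1 i2 o1 o2 r" "perfect_23pole T b1 b2 c1 c2 c3"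
    and colours: "x \<in> KK" "a \<in> KK" "b \<in> KK" "c \<in> KK" "a + b + c = 0"
  shows "\<exists>\<phi>. colouring (NT N T o1 o2 r b1 b2 c3) \<phi> \<and> \<phi> (NE i1) = x \<and> \<phi> (NE i2) = x \<and>
    \<phi> (TE c1) = a \<and> \<phi> (TE c2) = b \<and> \<phi> (TE c3) = c"
proof -
  obtain c' where c': "c' \<in> KK" "c' \<noteq> c"
    using KK_exists_other[OF colours(4)] by blast
  have cc': "c + c' \<in> KK" "distinct [c, c', c + c']"
    using KK_add_distinct[OF colours(4) c'(1)] c'(2) by auto
  have "(x, x, c, c', c + c') \<in> {(x, x, a, b, a + b) | x a b. x \<in> KK \<and> a \<in> KK \<and> b \<in> KK \<and> a \<noteq> b}"
    using colours(1,4) c' by blast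
  then have "(x, x, c, c', c + c') \<in> {(\<psi> i1, \<psi> i2, \<psi> o1, \<psi> o2, \<psi> r) | \<psi>. colouring N \<psi>}"
    using perfect(1) unfolding perfect_negator_def by (simp only: Un_iff simp_thms)
  then obtain \<psi> where \<psi>: "colouring N \<psi>" "\<psi> i1 = x" "\<psi> i2 = x" "\<psi> o1 = c" "\<psi> o2 = c'" "\<psi> r = c + c'"
    by auto
  have "a + b = c"
    using colours(5) by (simp add: colour_add_eq_0_iff)
  then have "c + c' = a + b + c'" "c + c' \<noteq> 0"
    using cc'(1) by (simp_all add: KK_eq)
  then have "(c, c', a, b, c') \<in> {(x1, x2, y1, y2, y3) | x1 x2 y1 y2 y3.
      x1 \<in> KK \<and> x2 \<in> KK \<and> y1 \<in> KK \<and> y2 \<in> KK \<and> y3 \<in> KK \<and> x1 + x2 = y1 + y2 + y3 \<and> x1 + x2 \<noteq> 0}"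
    using colours(2-4) c'(1) by blast
  then have "(c, c', a, b, c') \<in> {(\<chi> b1, \<chi> b2, \<chi> c1, \<chi> c2, \<chi> c3) | \<chi>. colouring T \<chi>}"
    using perfect(2) unfolding perfect_23pole_def by (simp only:)
  then obtain \<chi> where \<chi>: "colouring T \<chi>" "\<chi> b1 = c" "\<chi> b2 = c'" "\<chi> c1 = a" "\<chi> c2 = b" "\<chi> c3 = c'"
    by auto
  have "colouring (NT N T o1 o2 r b1 b2 c3) ((case_ntend \<psi> \<chi> (\<chi> c3) c)(TE c3 := c))"
    using \<psi> \<chi> colours(4) cc'(2) by (intro colouring_NTI[OF negator_23pole_NT_hyps[OF neg T23]]) auto
  then show ?thesis
    using \<psi> \<chi> T23 by (auto simp: is_23pole_def)
qed

theorem mainTheorem4: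
  fixes N :: "('a,'u) mpole" and T :: "('b,'x) mpole"
    and i1 i2 o1 o2 r :: 'a and b1 b2 c1 c2 c3 :: 'b
  assumes "is_negator N i1 i2 o1 o2 r"
    and "proper_23pole T b1 b2 c1 c2 c3"
  shows "(\<forall>\<phi>. colouring (NT N T o1 o2 r b1 b2 c3) \<phi> \<longrightarrow>
            \<phi> (NE i1) = \<phi> (NE i2) \<and> \<phi> (TE c1) + \<phi> (TE c2) + \<phi> (TE c3) = 0)
       \<and> (perfect_negator N i1 i2 o1 o2 r \<and> perfect_23pole T b1 b2 c1 c2 c3 \<longrightarrow>
            (\<forall>x\<in>KK. \<forall>a\<in>KK. \<forall>b\<in>KK. \<forall>c\<in>KK. a + b + c = 0 \<longrightarrow>
              (\<exists>\<phi>. colouring (NT N T o1 o2 r b1 b2 c3) \<phi> \<and>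
                 \<phi> (NE i1) = x \<and> \<phi> (NE i2) = x \<and>
                 \<phi> (TE c1) = a \<and> \<phi> (TE c2) = b \<and> \<phi> (TE c3) = c)))"
proof -
  have "is_23pole T b1 b2 c1 c2 c3"
    using assms(2) by (simp add: proper_23pole_def)
  show ?thesis
  proof (intro conjI allI impI ballI)
    fix \<phi> assume "colouring (NT N T o1 o2 r b1 b2 c3) \<phi>"
    then show "\<phi> (NE i1) = \<phi> (NE i2)" "\<phi> (TE c1) + \<phi> (TE c2) + \<phi> (TE c3) = 0"
      using colouring_NT_constraints[OF assms] by blast+
  qed (use colouring_NT_exists[OF assms(1) \<open>is_23pole T b1 b2 c1 c2 c3\<close>] in blast)
qed

end
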